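(* Let $n\ge1$, $D\ge1$, and let $X_n=\{\mathbf{x}^0,\ldots,\mathbf{x}^{n-1}\}\subseteq\{0,1\}^D$ consist of $n$ pairwise distinct vectors, indexed so that $\mathbf{a}\cdot\mathbf{x}^0<\cdots<\mathbf{a}\cdot\mathbf{x}^{n-1}$ for some $\mathbf{a}\in\mathbb{Z}^D$. Then there is a four-layer Boolean threshold network with $D$ input nodes, $3\lceil\sqrt n\rceil+D$ hidden nodes in total (in layers $2$ and $3$), and $\lceil\log_2 n\rceil$ output nodes that maps $\mathbf{x}^i$ to the $\lceil\log_2 n\rceil$-dimensional binary representation of $i$, for every $i=0,\ldots,n-1$.
   Context: A Boolean threshold function is a map $\{0,1\}^h\to\{0,1\}$, $\mathbf{u}\mapsto[\mathbf{w}\cdot\mathbf{u}\ge\theta]$ (value $1$ iff $\mathbf{w}\cdot\mathbf{u}\ge\theta$) with $\mathbf{w}\in\mathbb{Z}^h,\theta\in\mathbb{Z}$. An $L$-layer Boolean threshold network has layers $1,\ldots,L$; layer $1$ is the input; each node of layer $t+1$ computes a Boolean threshold function of the values of layer $t$; the network computes the map input $\mapsto$ values of layer $L$; layers $2,\ldots,L-1$ are hidden. *)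

theory Defs
  imports Complex_Main
begin

text \<open>A Boolean vector in {0,1}^h is a function nat => bool, of which only the
  entries at indices < h matter.\<close>

definition threshold_fn :: "nat \<Rightarrow> (nat \<Rightarrow> int) \<Rightarrow> int \<Rightarrow> (nat \<Rightarrow> bool) \<Rightarrow> bool" where
  "threshold_fn h w \<theta> u \<longleftrightarrow> (\<Sum>j<h. w j * of_bool (u j)) \<ge> \<theta>"

text \<open>A layer transition: node k of the next layer uses weights W k and threshold th k.
  A network is given by the list of layer widths ws (layer 1 = input, last = output)
  and a list of length (length ws - 1) of layer transitions.\<close>

type_synonym layer = "(nat \<Rightarrow> nat \<Rightarrow> int) \<times> (nat \<Rightarrow> int)"

fun net_eval :: "nat list \<Rightarrow> layer list \<Rightarrow> (nat \<Rightarrow> bool) \<Rightarrow> (nat \<Rightarrow> bool)" where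
  "net_eval (h # h' # hs) ((W, th) # ls) u =
     net_eval (h' # hs) ls (\<lambda>k. threshold_fn h (W k) (th k) u)"
| "net_eval _ _ u = u"

definition threshold_network :: "nat list \<Rightarrow> layer list \<Rightarrow> bool" where
  "threshold_network ws ls \<longleftrightarrow> ws \<noteq> [] \<and> length ls = length ws - 1"

end

theory Submission
  imports Defs
begin

text \<open>Write \<open>b = 2^t\<close> with \<open>\<lceil>sqrt n\<rceil> \<le> b < 2\<lceil>sqrt n\<rceil>\<close> and split the index as \<open>i = q b + r\<close>
  with \<open>r < b\<close>. Since the sequence \<open>a \<cdot> x\<^sup>i\<close> is strictly increasing, the test \<open>i \<ge> p\<close> is a single
  threshold on \<open>a \<cdot> x\<close> for every \<open>p\<close>. The second layer copies the input and computes the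
  thermometer code \<open>[q' < q]\<close> of \<open>q\<close> by the tests \<open>i \<ge> (q' + 1) b\<close>. The third layer copies
  that code and computes the thermometer code \<open>[r' < r]\<close> of \<open>r\<close>: the test \<open>i \<ge> q b + r' + 1\<close>
  is linear in the input and the code of \<open>q\<close>, because its threshold telescopes along \<open>q\<close>.
  Each output bit is then a telescoping sum of one of the two thermometer codes.\<close>

definition layer_eval :: "nat \<Rightarrow> layer \<Rightarrow> (nat \<Rightarrow> bool) \<Rightarrow> nat \<Rightarrow> bool" where
  "layer_eval h l u k = threshold_fn h (fst l k) (snd l k) u"

lemma net_eval_Cons_Cons:
  "net_eval (h # h' # hs) (l # ls) u = net_eval (h' # hs) ls (layer_eval h l u)"
  by (cases l) (simp add: layer_eval_def [abs_def])

lemma sum_lessThan_add_split: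
  fixes f :: "nat \<Rightarrow> 'a::comm_monoid_add"
  shows "(\<Sum>j<D + m. f j) = (\<Sum>j<D. f j) + (\<Sum>j<m. f (D + j))"
  by (induction m) (simp_all add: add.assoc)

lemma sum_of_bool_less_prefix:
  fixes g :: "nat \<Rightarrow> int"
  assumes "q \<le> m"
  shows "(\<Sum>j<m. g j * of_bool (j < q)) = (\<Sum>j<q. g j)"
proof -
  have "(\<Sum>j<m. g j * of_bool (j < q)) = (\<Sum>j<m. if j < q then g j else 0)"
    by (rule sum.cong) auto
  also have "\<dots> = (\<Sum>j\<in>{j\<in>{..<m}. j < q}. g j)"
    by (rule sum.inter_filter[symmetric]) simp
  also have "{j\<in>{..<m}. j < q} = {..<q}"
    using assms by auto
  finally show ?thesis .
qed

lemma threshold_fn_select: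
  assumes "j0 < h"
  shows "threshold_fn h (\<lambda>j. of_bool (j = j0)) 1 u = u j0"
proof -
  have "(\<Sum>j<h. of_bool (j = j0) * of_bool (u j)) = (\<Sum>j<h. if j = j0 then of_bool (u j) else 0 :: int)"
    by (rule sum.cong) auto
  also have "\<dots> = of_bool (u j0)"
    using assms by simp
  finally have sum_eq: "(\<Sum>j<h. of_bool (j = j0) * of_bool (u j)) = (of_bool (u j0) :: int)" .
  show ?thesis
    unfolding threshold_fn_def sum_eq by simp
qed

lemma threshold_fn_cong:
  assumes "\<And>j. j < h \<Longrightarrow> u j = u' j"
  shows "threshold_fn h w \<theta> u = threshold_fn h w \<theta> u'"
proof -
  have "(\<Sum>j<h. w j * of_bool (u j)) = (\<Sum>j<h. w j * of_bool (u' j))"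
    using assms by (intro sum.cong) auto
  then show ?thesis
    by (simp only: threshold_fn_def)
qed

lemma threshold_fn_block:
  assumes "m + l \<le> h"
  shows "threshold_fn h (\<lambda>j. if m \<le> j \<and> j < m + l then w (j - m) else 0) \<theta> u
       = threshold_fn l w \<theta> (\<lambda>j. u (m + j))"
proof -
  have "(\<Sum>j<h. (if m \<le> j \<and> j < m + l then w (j - m) else 0) * of_bool (u j))
      = (\<Sum>j\<in>{m..<m + l}. w (j - m) * of_bool (u j))"
    using assms by (intro sum.mono_neutral_cong_right) auto
  also have "\<dots> = (\<Sum>j<l. w j * of_bool (u (m + j)))"
    using sum.shift_bounds_nat_ivl[of "\<lambda>j. w (j - m) * of_bool (u j)" 0 m l]
    by (simp add: atLeast0LessThan add.commute)
  finally show ?thesis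
    by (simp add: threshold_fn_def)
qed

definition bit_step :: "nat \<Rightarrow> nat \<Rightarrow> int" where
  "bit_step k j = of_bool (bit (Suc j) k) - of_bool (bit j k)"

lemma threshold_fn_bit_step:
  assumes "r \<le> l"
  shows "threshold_fn l (bit_step k) 1 (\<lambda>j. j < r) = bit r k"
proof -
  have "(\<Sum>j<l. bit_step k j * of_bool (j < r)) = (\<Sum>j<r. bit_step k j)"
    by (rule sum_of_bool_less_prefix[OF assms])
  also have "\<dots> = of_bool (bit r k)"
    using sum_lessThan_telescope[of "\<lambda>j. of_bool (bit j k) :: int" r]
    by (simp add: bit_step_def)
  finally show ?thesis
    by (simp add: threshold_fn_def)
qed

lemma bit_mult_power_add:
  fixes q r :: nat
  assumes "r < 2 ^ t"
  shows "bit (q * 2 ^ t + r) k = (if k < t then bit r k else bit q (k - t))"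
proof (cases "k < t")
  case True
  have "bit r k = bit (take_bit t (q * 2 ^ t + r)) k"
    using assms by (simp add: take_bit_eq_mod)
  with True show ?thesis
    by (simp add: bit_take_bit_iff)
next
  case False
  have "bit q (k - t) = bit (drop_bit t (q * 2 ^ t + r)) (k - t)"
    using assms by (simp add: drop_bit_eq_div)
  with False show ?thesis
    by (simp add: bit_drop_bit_eq)
qed

definition rank_threshold :: "nat \<Rightarrow> (nat \<Rightarrow> int) \<Rightarrow> nat \<Rightarrow> int" where
  "rank_threshold n f p = (if p < n then f p else f (n - 1) + 1)"

lemma rank_threshold_le_iff:
  assumes "strict_mono_on {..<n} f" and "i < n"
  shows "rank_threshold n f p \<le> f i \<longleftrightarrow> p \<le> i"
proof (cases "p < n")
  case True
  then show ?thesis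
    using assms by (simp add: rank_threshold_def strict_mono_on_less_eq)
next
  case False
  have "f i \<le> f (n - 1)"
    using assms by (simp add: strict_mono_on_less_eq)
  then show ?thesis
    using False assms(2) by (simp add: rank_threshold_def)
qed

text \<open>In the three layers below, \<open>V p\<close> is a threshold for the test \<open>i \<ge> p\<close> on the input
  value \<open>a \<cdot> u\<close>, and \<open>b\<close> is the block length in \<open>i = q b + r\<close>.\<close>

definition quotient_layer :: "nat \<Rightarrow> (nat \<Rightarrow> int) \<Rightarrow> (nat \<Rightarrow> int) \<Rightarrow> nat \<Rightarrow> layer" where
  "quotient_layer D a V b =
     (\<lambda>k j. if k < D then of_bool (j = k) else a j,
      \<lambda>k. if k < D then 1 else V ((k - D + 1) * b))"

definition remainder_layer :: "nat \<Rightarrow> nat \<Rightarrow> (nat \<Rightarrow> int) \<Rightarrow> (nat \<Rightarrow> int) \<Rightarrow> nat \<Rightarrow> layer" where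
  "remainder_layer D m a V b =
     (\<lambda>k j. if k < m then of_bool (j = D + k)
            else if j < D then a j
            else V ((j - D) * b + (k - m) + 1) - V ((j - D + 1) * b + (k - m) + 1),
      \<lambda>k. if k < m then 1 else V (k - m + 1))"

definition binary_layer :: "nat \<Rightarrow> nat \<Rightarrow> layer" where
  "binary_layer m t =
     (\<lambda>k j. if k < t then (if m \<le> j \<and> j < m + (2 ^ t - 1) then bit_step k (j - m) else 0)
            else (if j < m then bit_step (k - t) j else 0),
      \<lambda>k. 1)"

lemma layer_eval_quotient_layer:
  assumes rank: "\<And>p. V p \<le> (\<Sum>j<D. a j * of_bool (u j)) \<longleftrightarrow> p \<le> i" and "0 < b"
  shows "layer_eval D (quotient_layer D a V b) u j = (if j < D then u j else j - D < i div b)"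
proof (cases "j < D")
  case True
  then show ?thesis
    by (simp add: layer_eval_def quotient_layer_def threshold_fn_select)
next
  case False
  have "layer_eval D (quotient_layer D a V b) u j = ((j - D + 1) * b \<le> i)"
    using False rank[of "(j - D + 1) * b"]
    by (simp add: layer_eval_def quotient_layer_def threshold_fn_def)
  also have "\<dots> = (j - D < i div b)"
    using less_eq_div_iff_mult_less_eq[OF \<open>0 < b\<close>, of "Suc (j - D)" i] by (simp add: Suc_le_eq)
  finally show ?thesis
    using False by simp
qed

lemma layer_eval_remainder_layer:
  assumes rank: "\<And>p. V p \<le> (\<Sum>j<D. a j * of_bool (u j)) \<longleftrightarrow> p \<le> i"
    and "0 < b" and "i div b \<le> m"
  shows "layer_eval (D + m) (remainder_layer D m a V b) (layer_eval D (quotient_layer D a V b) u) k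
       = (if k < m then k < i div b else k - m < i mod b)"
proof -
  define h where "h = layer_eval D (quotient_layer D a V b) u"
  have h: "h j = (if j < D then u j else j - D < i div b)" for j
    unfolding h_def using assms(1,2) by (rule layer_eval_quotient_layer)
  show ?thesis
  proof (cases "k < m")
    case True
    then show ?thesis
      by (simp add: layer_eval_def remainder_layer_def threshold_fn_select h flip: h_def)
  next
    case False
    define r where "r = k - m"
    define q where "q = i div b"
    let ?V = "\<lambda>q'. V (q' * b + r + 1)"
    have "(\<Sum>j<D + m. fst (remainder_layer D m a V b) k j * of_bool (h j))
        = (\<Sum>j<D. a j * of_bool (u j)) + (\<Sum>j<m. (?V j - ?V (Suc j)) * of_bool (j < q))"
      using False by (simp add: sum_lessThan_add_split remainder_layer_def h q_def r_def)
    also have "(\<Sum>j<m. (?V j - ?V (Suc j)) * of_bool (j < q)) = (\<Sum>j<q. ?V j - ?V (Suc j))"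
      using assms(3) unfolding q_def by (rule sum_of_bool_less_prefix)
    also have "\<dots> = ?V 0 - ?V q"
      by (rule sum_lessThan_telescope')
    finally have "layer_eval (D + m) (remainder_layer D m a V b) h k = (?V q \<le> (\<Sum>j<D. a j * of_bool (u j)))"
      using False by (simp add: layer_eval_def threshold_fn_def remainder_layer_def r_def)
    also have "\<dots> = (q * b + r + 1 \<le> i)"
      by (rule rank)
    also have "\<dots> = (r < i mod b)"
      using div_mult_mod_eq[of i b] unfolding q_def by linarith
    finally show ?thesis
      using False by (simp add: h_def r_def)
  qed
qed

lemma layer_eval_binary_layer:
  assumes "q \<le> m" and "r < 2 ^ t" and "m + (2 ^ t - 1) \<le> h"
  shows "layer_eval h (binary_layer m t) (\<lambda>j. if j < m then j < q else j - m < r) k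
       = bit (q * 2 ^ t + r) k"
proof (cases "k < t")
  case True
  have "layer_eval h (binary_layer m t) (\<lambda>j. if j < m then j < q else j - m < r) k
      = threshold_fn (2 ^ t - 1) (bit_step k) 1 (\<lambda>j. j < r)"
    using True threshold_fn_block[OF assms(3), of "bit_step k"]
    by (simp add: layer_eval_def binary_layer_def)
  also have "\<dots> = bit r k"
    using assms(2) by (simp add: threshold_fn_bit_step)
  finally show ?thesis
    using True assms(2) by (simp add: bit_mult_power_add)
next
  case False
  let ?v = "\<lambda>j. if j < m then j < q else j - m < r"
  have "layer_eval h (binary_layer m t) ?v k
      = threshold_fn h (\<lambda>j. if j < m then bit_step (k - t) j else 0) 1 ?v"
    using False by (simp add: layer_eval_def binary_layer_def)
  also have "\<dots> = threshold_fn m (bit_step (k - t)) 1 ?v"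
    using threshold_fn_block[of 0 m h "bit_step (k - t)" 1 ?v] assms(3) by (simp cong: if_cong)
  also have "\<dots> = threshold_fn m (bit_step (k - t)) 1 (\<lambda>j. j < q)"
    by (rule threshold_fn_cong) simp
  also have "\<dots> = bit q (k - t)"
    using assms(1) by (rule threshold_fn_bit_step)
  finally show ?thesis
    using False assms(2) by (simp add: bit_mult_power_add)
qed

definition index_network :: "nat \<Rightarrow> nat \<Rightarrow> (nat \<Rightarrow> int) \<Rightarrow> (nat \<Rightarrow> int) \<Rightarrow> nat \<Rightarrow> layer list" where
  "index_network D m a V t =
     [quotient_layer D a V (2 ^ t), remainder_layer D m a V (2 ^ t), binary_layer m t]"

lemma net_eval_index_network:
  assumes rank: "\<And>p. V p \<le> (\<Sum>j<D. a j * of_bool (u j)) \<longleftrightarrow> p \<le> i"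
    and "i div 2 ^ t \<le> m" and "m + (2 ^ t - 1) \<le> h"
  shows "net_eval [D, D + m, h, L] (index_network D m a V t) u k = bit i k"
proof -
  have "(\<lambda>j. layer_eval (D + m) (remainder_layer D m a V (2 ^ t))
                (layer_eval D (quotient_layer D a V (2 ^ t)) u) j)
      = (\<lambda>j. if j < m then j < i div 2 ^ t else j - m < i mod 2 ^ t)"
    using layer_eval_remainder_layer[OF rank _ assms(2)] by simp
  moreover have "bit (i div 2 ^ t * 2 ^ t + i mod 2 ^ t) k = bit i k"
    by (simp only: div_mult_mod_eq)
  ultimately show ?thesis
    using layer_eval_binary_layer[OF assms(2) _ assms(3)]
    by (simp add: index_network_def net_eval_Cons_Cons eta_contract_eq)
qed

lemma ex_power2_between:
  assumes "1 \<le> (s::nat)"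
  shows "\<exists>t. s \<le> 2 ^ t \<and> 2 ^ t < 2 * s"
proof (cases "s = 1")
  case True
  then show ?thesis
    by (intro exI[of _ 0]) simp
next
  case False
  then obtain t where "2 ^ t < s" "s \<le> 2 ^ Suc t"
    using ex_power_ivl2[of 2 s] assms by auto
  then show ?thesis
    by (intro exI[of _ "Suc t"]) simp
qed

lemma le_ceiling_sqrt_square: "n \<le> nat \<lceil>sqrt (real n)\<rceil> * nat \<lceil>sqrt (real n)\<rceil>"
proof -
  define c where "c = nat \<lceil>sqrt (real n)\<rceil>"
  have "sqrt (real n) \<le> real c"
    unfolding c_def by linarith
  then have "sqrt (real n) ^ 2 \<le> real c ^ 2"
    by (rule power_mono) simp
  then have "real n \<le> real (c * c)"
    by (simp add: power2_eq_square)
  then show ?thesis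
    unfolding c_def of_nat_le_iff .
qed

text \<open>The block count \<open>m\<close> and block length \<open>b\<close> fit into \<open>3 s\<close> nodes because
  \<open>(b - s) (b - 2 s) \<le> 0\<close>, i.e. \<open>b\<^sup>2 + 2 s\<^sup>2 \<le> 3 s b\<close>.\<close>

lemma double_div_add_less:
  fixes n s b :: nat
  assumes "1 \<le> n" and "n \<le> s * s" and "s \<le> b" and "b < 2 * s"
  shows "2 * ((n - 1) div b) + b < 3 * s"
proof -
  define m where "m = (n - 1) div b"
  have "m * b < s * s"
    using assms(1,2) div_times_less_eq_dividend[of "n - 1" b] unfolding m_def by linarith
  then have "int m * int b < int s * int s"
    by (simp flip: of_nat_mult)
  moreover have "(int b - int s) * (int b - 2 * int s) \<le> 0"
    using assms(3,4) by (intro mult_nonneg_nonpos) simp_all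
  ultimately have "int (2 * m + b) * int b < int (3 * s) * int b"
    by (simp add: algebra_simps)
  then have "int (2 * m + b) < int (3 * s)"
    by (rule mult_right_less_imp_less) simp
  then show ?thesis
    unfolding m_def of_nat_less_iff .
qed

lemma ex_power2_block_width:
  assumes "1 \<le> n"
  shows "\<exists>t. 2 * ((n - 1) div 2 ^ t) + 2 ^ t < 3 * nat \<lceil>sqrt (real n)\<rceil>"
proof -
  define s where "s = nat \<lceil>sqrt (real n)\<rceil>"
  have "n \<le> s * s"
    unfolding s_def by (rule le_ceiling_sqrt_square)
  then have "1 \<le> s"
    using assms by (cases s) simp_all
  then obtain t where "s \<le> 2 ^ t" "2 ^ t < 2 * s"
    using ex_power2_between by blast
  then show ?thesis
    using double_div_add_less[OF assms \<open>n \<le> s * s\<close>] unfolding s_def by blast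
qed

theorem theorem15:
  fixes n D :: nat and x :: "nat \<Rightarrow> nat \<Rightarrow> bool" and a :: "nat \<Rightarrow> int"
  assumes "n \<ge> 1" and "D \<ge> 1"
    and distinct: "\<And>i i'. i < n \<Longrightarrow> i' < n \<Longrightarrow> i \<noteq> i' \<Longrightarrow> (\<exists>j<D. x i j \<noteq> x i' j)"
    and order: "\<And>i i'. i < i' \<Longrightarrow> i' < n \<Longrightarrow>
                 (\<Sum>j<D. a j * of_bool (x i j)) < (\<Sum>j<D. a j * of_bool (x i' j))"
  shows "\<exists>d2 d3 ls.
           threshold_network [D, d2, d3, nat \<lceil>log 2 (real n)\<rceil>] ls \<and>
           d2 + d3 = 3 * nat \<lceil>sqrt (real n)\<rceil> + D \<and>
           (\<forall>i<n. \<forall>k<nat \<lceil>log 2 (real n)\<rceil>.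
              net_eval [D, d2, d3, nat \<lceil>log 2 (real n)\<rceil>] ls (x i) k = bit i k)"
proof -
  define s where "s = nat \<lceil>sqrt (real n)\<rceil>"
  define score where "score = (\<lambda>i. \<Sum>j<D. a j * of_bool (x i j))"
  obtain t where width: "2 * ((n - 1) div 2 ^ t) + 2 ^ t < 3 * s"
    unfolding s_def using ex_power2_block_width \<open>n \<ge> 1\<close> by blast
  define m where "m = (n - 1) div 2 ^ t"
  have "strict_mono_on {..<n} score"
    by (rule strict_mono_onI) (unfold score_def, rule order, simp_all)
  then have rank: "rank_threshold n score p \<le> (\<Sum>j<D. a j * of_bool (x i j)) \<longleftrightarrow> p \<le> i"
    if "i < n" for i p
    using rank_threshold_le_iff that by (simp add: score_def)
  have quotient: "i div 2 ^ t \<le> m" if "i < n" for i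
    using that by (simp add: m_def div_le_mono)
  define ls where "ls = index_network D m a (rank_threshold n score) t"
  have "net_eval [D, D + m, 3 * s - m, L] ls (x i) k = bit i k" if "i < n" for i k L
    unfolding ls_def using rank[OF that] quotient[OF that] width
    by (intro net_eval_index_network) (simp_all add: m_def)
  moreover have "threshold_network [D, D + m, 3 * s - m, L] ls" for L
    by (simp add: threshold_network_def ls_def index_network_def)
  moreover have "(D + m) + (3 * s - m) = 3 * s + D"
    using width by (simp add: m_def)
  ultimately show ?thesis
    unfolding s_def by blast
qed

end
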